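(* Let $P,Q$ be probability measures on $(\Omega,\mathcal{M})$ and $\tau:\Omega\to[0,\infty]$ measurable. Then (1) $$\log\Big[\int\tau\,dQ\Big]\le\inf_{c>1}\Big\{\frac1c\log\Big[\int\tau^c\,dP\Big]+\frac{1}{c-1}R_{c/(c-1)}(Q\|P)\Big\},$$ with the convention $-\infty+\infty=\infty$; (2) $$\log\Big[\int\tau\,dQ\Big]\ge\sup_{c<1,\,c\ne0}\Big\{\frac1c\log\Big[\int\tau^c\,dP\Big]-\frac{1}{1-c}R_{1/(1-c)}(P\|Q)\Big\},$$ with the convention $\infty-\infty=-\infty$.
   Context: Powers of extended nonnegative reals are $\tau^c=\exp(c\log\tau)$, using the continuous extensions of $\exp$ and $\log$ to the extended reals. Rényi divergence: let $\nu$ be a $\sigma$-finite positive measure with $dP=p\,d\nu$, $dQ=q\,d\nu$. For $\alpha\in(0,1)$, $R_\alpha(Q\|P)=\frac{1}{\alpha(\alpha-1)}\log\int_{p>0}q^\alpha p^{1-\alpha}\,d\nu$; for $\alpha>1$, the same formula if $Q\ll P$ and $R_\alpha(Q\|P)=+\infty$ if $Q\not\ll P$; for $\alpha<0$, $R_\alpha(Q\|P)=R_{1-\alpha}(P\|Q)$. *)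

theory Defs
  imports "HOL-Probability.Probability"
begin

definition elog :: "ennreal \<Rightarrow> ereal" where
  "elog x = (if x = 0 then -\<infinity> else if x = \<infinity> then \<infinity> else ereal (ln (enn2real x)))"

definition eexp :: "ereal \<Rightarrow> ennreal" where
  "eexp y = (case y of ereal r \<Rightarrow> ennreal (exp r) | PInfty \<Rightarrow> \<infinity> | MInfty \<Rightarrow> 0)"

definition epow :: "ennreal \<Rightarrow> real \<Rightarrow> ennreal" where
  "epow t c = eexp (ereal c * elog t)"

text \<open>Renyi divergence R_alpha(Q||P) for orders alpha > 0, alpha \<noteq> 1, where
  dQ = q d\<nu> and dP = p d\<nu>.  (The case alpha < 0 is R_alpha(Q||P) = R_{1-alpha}(P||Q).)\<close>
definition renyi_pos :: "'a measure \<Rightarrow> ('a \<Rightarrow> ennreal) \<Rightarrow> ('a \<Rightarrow> ennreal) \<Rightarrow> real \<Rightarrow> ereal" where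
  "renyi_pos \<nu> q p \<alpha> =
     (if \<alpha> > 1 \<and> \<not> absolutely_continuous (density \<nu> p) (density \<nu> q) then \<infinity>
      else ereal (1 / (\<alpha> * (\<alpha> - 1))) *
             elog (\<integral>\<^sup>+ x. (if p x > 0 then epow (q x) \<alpha> * epow (p x) (1 - \<alpha>) else 0) \<partial>\<nu>))"

definition renyi :: "'a measure \<Rightarrow> ('a \<Rightarrow> ennreal) \<Rightarrow> ('a \<Rightarrow> ennreal) \<Rightarrow> real \<Rightarrow> ereal" where
  "renyi \<nu> q p \<alpha> = (if \<alpha> < 0 then renyi_pos \<nu> p q (1 - \<alpha>) else renyi_pos \<nu> q p \<alpha>)"

definition minus_conv :: "ereal \<Rightarrow> ereal \<Rightarrow> ereal" where
  "minus_conv a b = (if a = \<infinity> \<and> b = \<infinity> then -\<infinity> else a - b)"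

end

theory Submission
  imports Defs
begin

(* Both bounds are Holder's inequality  int F^t G^(1-t) <= (int F)^t (int G)^(1-t)  on nu, applied to
   a pointwise factorisation of the integrand.  For c > 1 and alpha = c/(c-1),
     q tau = (p tau^c)^(1/c) * (q^alpha p^(1-alpha))^(1-1/c);
   for 0 < c < 1 the same factorisation, with P and Q exchanged and tau replaced by tau^c, gives the
   lower bound; for c < 0 and alpha = 1/(1-c),
     p^alpha q^(1-alpha) = (p tau^c)^alpha * (q tau)^(1-alpha).
   Taking tau = 1 gives the sign of the Renyi integral, which keeps the subtracted Renyi term from
   being -infinity; the rest is bookkeeping of the values 0 and infinity. *)

lemma borel_measurable_elog [measurable]: "elog \<in> borel_measurable borel"
  unfolding elog_def by measurable

lemma eexp_eq: "eexp y = (if y = \<infinity> then \<infinity> else if y = -\<infinity> then 0 else ennreal (exp (real_of_ereal y)))"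
  by (cases y) (auto simp: eexp_def)

lemma borel_measurable_eexp [measurable]: "eexp \<in> borel_measurable borel"
  unfolding eexp_eq[abs_def] by measurable

lemma borel_measurable_epow [measurable]:
  "f \<in> borel_measurable M \<Longrightarrow> (\<lambda>x. epow (f x) c) \<in> borel_measurable M"
  unfolding epow_def by measurable

lemma ennreal_cases_pos:
  fixes x :: ennreal
  obtains (zero) "x = 0" | (top) "x = \<top>" | (pos) r where "r > 0" "x = ennreal r"
proof (cases x)
  case (real r)
  then show ?thesis using that by (cases "r = 0") auto
qed (use that in auto)

lemma elog_ennreal: "r > 0 \<Longrightarrow> elog (ennreal r) = ereal (ln r)"
  by (simp add: elog_def)

lemma elog_0 [simp]: "elog 0 = -\<infinity>"
  and elog_top [simp]: "elog \<top> = \<infinity>"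
  and elog_1 [simp]: "elog 1 = 0"
  by (simp_all add: elog_def)

lemma elog_eq_infinity_iff: "elog x = \<infinity> \<longleftrightarrow> x = \<top>"
  by (cases x rule: ennreal_cases_pos) (auto simp: elog_ennreal)

lemma elog_eexp: "elog (eexp y) = y"
  by (cases y) (auto simp: eexp_def elog_def)

lemma elog_epow: "elog (epow x c) = ereal c * elog x"
  by (simp add: epow_def elog_eexp)

lemma elog_mono: "x \<le> y \<Longrightarrow> elog x \<le> elog y"
  by (cases x rule: ennreal_cases_pos; cases y rule: ennreal_cases_pos)
    (auto simp: elog_ennreal top_unique)

lemma elog_mult_le: "elog (x * y) \<le> elog x + elog y"
proof (cases x rule: ennreal_cases_pos)
  case top
  then show ?thesis by (cases "y = 0") (simp_all add: ennreal_top_mult)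
next
  case (pos r)
  then show ?thesis
    by (cases y rule: ennreal_cases_pos)
      (simp_all add: ennreal_mult_top elog_ennreal ln_mult flip: ennreal_mult)
qed simp

lemma epow_ennreal: "r > 0 \<Longrightarrow> epow (ennreal r) c = ennreal (r powr c)"
  by (simp add: epow_def elog_ennreal eexp_def powr_def)

lemma epow_zero: "c > 0 \<Longrightarrow> epow 0 c = 0"
  and epow_zero_neg: "c < 0 \<Longrightarrow> epow 0 c = \<top>"
  and epow_top: "c > 0 \<Longrightarrow> epow \<top> c = \<top>"
  by (simp_all add: epow_def eexp_def)

lemma epow_one_eq_one [simp]: "epow 1 c = 1"
  by (simp add: epow_def eexp_def zero_ereal_def)

lemma epow_one [simp]: "epow x 1 = x"
  by (cases x rule: ennreal_cases_pos) (simp_all add: epow_def eexp_def elog_ennreal)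

lemma epow_epow: "epow (epow x a) b = epow x (a * b)"
  unfolding epow_def elog_eexp by (metis mult.assoc mult.commute times_ereal.simps(1))

lemma epow_eq_0_iff: "c > 0 \<Longrightarrow> epow x c = 0 \<longleftrightarrow> x = 0"
  by (cases x rule: ennreal_cases_pos) (auto simp: epow_zero epow_top epow_ennreal)

lemma Youngs_inequality_scaled:
  fixes x y a b t :: real
  assumes "0 < t" "t < 1" "a > 0" "b > 0" "x \<ge> 0" "y \<ge> 0"
  shows "x powr t * y powr (1 - t) \<le> (a powr t * b powr (1 - t)) * (t / a * x + (1 - t) / b * y)"
proof (cases "x = 0 \<or> y = 0")
  case True
  then show ?thesis using assms by auto
next
  case False
  have "(x/a) powr t * (y/b) powr (1-t) \<le> t * (x/a) + (1-t) * (y/b)"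
    using Youngs_inequality_0[of t "1-t" "x/a" "y/b"] assms False by simp
  then have "(a powr t * b powr (1 - t)) * ((x/a) powr t * (y/b) powr (1-t))
        \<le> (a powr t * b powr (1 - t)) * (t * (x/a) + (1-t) * (y/b))"
    by (rule mult_left_mono) simp
  moreover have "(a powr t * b powr (1 - t)) * ((x/a) powr t * (y/b) powr (1-t)) = x powr t * y powr (1 - t)"
    using assms by (simp add: powr_divide field_simps)
  ultimately show ?thesis by simp
qed

lemma epow_Youngs_inequality_scaled:
  fixes x y :: ennreal and a b t :: real
  assumes t: "0 < t" "t < 1" and "a > 0" "b > 0"
  shows "epow x t * epow y (1 - t)
    \<le> ennreal (a powr t * b powr (1 - t)) * (ennreal (t / a) * x + ennreal ((1 - t) / b) * y)"
proof (cases "x = \<top> \<or> y = \<top>")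
  case True
  then show ?thesis using assms by (auto simp: ennreal_mult_top)
next
  case False
  then obtain r s where rs: "x = ennreal r" "y = ennreal s" "r \<ge> 0" "s \<ge> 0"
    by (metis ennreal_cases)
  have epow_nonneg: "epow (ennreal r) t = ennreal (r powr t)" if "r \<ge> 0" "t > 0" for r t :: real
    using that by (cases "r = 0") (simp_all add: epow_ennreal epow_zero)
  have "epow x t * epow y (1 - t) = ennreal (r powr t * s powr (1 - t))"
    using rs t by (simp add: epow_nonneg ennreal_mult)
  also have "\<dots> \<le> ennreal ((a powr t * b powr (1 - t)) * (t / a * r + (1 - t) / b * s))"
    using Youngs_inequality_scaled[of t a b r s] assms rs by (intro ennreal_leI) simp
  also have "\<dots> = ennreal (a powr t * b powr (1 - t)) * (ennreal (t / a) * x + ennreal ((1 - t) / b) * y)"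
    using rs assms by (simp add: ennreal_mult[symmetric] ennreal_plus[symmetric] del: ennreal_plus)
  finally show ?thesis .
qed

lemma nn_integral_Holder_epow:
  fixes F G :: "'a \<Rightarrow> ennreal" and t :: real
  assumes [measurable]: "F \<in> borel_measurable M" "G \<in> borel_measurable M"
    and t: "0 < t" "t < 1"
  shows "(\<integral>\<^sup>+ x. epow (F x) t * epow (G x) (1 - t) \<partial>M)
         \<le> epow (\<integral>\<^sup>+ x. F x \<partial>M) t * epow (\<integral>\<^sup>+ x. G x \<partial>M) (1 - t)"
proof -
  define A where "A = (\<integral>\<^sup>+ x. F x \<partial>M)"
  define B where "B = (\<integral>\<^sup>+ x. G x \<partial>M)"
  consider "A = 0 \<or> B = 0" | "A = \<top> \<or> B = \<top>" "A \<noteq> 0" "B \<noteq> 0"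
    | a b where "a > 0" "A = ennreal a" "b > 0" "B = ennreal b"
    by (metis ennreal_cases_pos)
  then show ?thesis
  proof cases
    case 1
    then have "AE x in M. F x = 0 \<or> G x = 0"
      unfolding A_def B_def by (auto simp: nn_integral_0_iff_AE elim: AE_mp)
    then have "AE x in M. epow (F x) t * epow (G x) (1 - t) = 0"
      by eventually_elim (use t in \<open>auto simp: epow_zero\<close>)
    then have "(\<integral>\<^sup>+ x. epow (F x) t * epow (G x) (1 - t) \<partial>M) = (\<integral>\<^sup>+ x. 0 \<partial>M)"
      by (rule nn_integral_cong_AE)
    then show ?thesis by simp
  next
    case 2
    then have "epow A t * epow B (1 - t) = \<top>"
      using t by (auto simp: epow_top epow_eq_0_iff ennreal_mult_top ennreal_top_mult)
    then show ?thesis unfolding A_def B_def by simp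
  next
    case 3
    \<comment> \<open>Young's inequality, rescaled by the two integrals, integrates to the Holder bound.\<close>
    have "(\<integral>\<^sup>+ x. epow (F x) t * epow (G x) (1 - t) \<partial>M)
        \<le> (\<integral>\<^sup>+ x. ennreal (a powr t * b powr (1 - t))
                  * (ennreal (t / a) * F x + ennreal ((1 - t) / b) * G x) \<partial>M)"
      using 3 t by (intro nn_integral_mono epow_Youngs_inequality_scaled) auto
    also have "\<dots> = ennreal (a powr t * b powr (1 - t)) * (ennreal (t / a) * A + ennreal ((1 - t) / b) * B)"
      unfolding A_def B_def by (simp add: nn_integral_cmult nn_integral_add)
    also have "ennreal (t / a) * A + ennreal ((1 - t) / b) * B = 1"
      using 3 t by (simp flip: ennreal_mult ennreal_plus add: ennreal_1[symmetric] del: ennreal_1)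
    also have "ennreal (a powr t * b powr (1 - t)) = epow A t * epow B (1 - t)"
      using 3 by (simp add: epow_ennreal ennreal_mult)
    finally show ?thesis unfolding A_def B_def by simp
  qed
qed

lemma elog_nn_integral_Holder:
  fixes F G H :: "'a \<Rightarrow> ennreal" and t :: real
  assumes "F \<in> borel_measurable M" "G \<in> borel_measurable M" "0 < t" "t < 1"
    and "AE x in M. H x \<le> epow (F x) t * epow (G x) (1 - t)"
  shows "elog (\<integral>\<^sup>+ x. H x \<partial>M)
         \<le> ereal t * elog (\<integral>\<^sup>+ x. F x \<partial>M) + ereal (1 - t) * elog (\<integral>\<^sup>+ x. G x \<partial>M)"
proof -
  have "elog (\<integral>\<^sup>+ x. H x \<partial>M) \<le> elog (\<integral>\<^sup>+ x. epow (F x) t * epow (G x) (1 - t) \<partial>M)"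
    using assms(5) by (intro elog_mono nn_integral_mono_AE)
  also have "\<dots> \<le> elog (epow (\<integral>\<^sup>+ x. F x \<partial>M) t * epow (\<integral>\<^sup>+ x. G x \<partial>M) (1 - t))"
    by (intro elog_mono nn_integral_Holder_epow assms(1-4))
  also have "\<dots> \<le> elog (epow (\<integral>\<^sup>+ x. F x \<partial>M) t) + elog (epow (\<integral>\<^sup>+ x. G x \<partial>M) (1 - t))"
    by (rule elog_mult_le)
  finally show ?thesis by (simp only: elog_epow)
qed

lemma AE_density_finite:
  assumes [measurable]: "p \<in> borel_measurable \<nu>" and "prob_space (density \<nu> p)"
  shows "AE x in \<nu>. p x \<noteq> \<top>"
proof -
  have "(\<integral>\<^sup>+ x. p x \<partial>\<nu>) = emeasure (density \<nu> p) (space \<nu>)"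
    by (subst emeasure_density) (auto intro!: nn_integral_cong)
  also have "\<dots> = 1"
    using prob_space.emeasure_space_1[OF assms(2)] by simp
  finally show ?thesis
    using nn_integral_PInf_AE[of p \<nu>] by simp
qed

lemma absolutely_continuous_density_AE:
  assumes [measurable]: "p \<in> borel_measurable \<nu>" "q \<in> borel_measurable \<nu>"
    and "absolutely_continuous (density \<nu> p) (density \<nu> q)"
  shows "AE x in \<nu>. q x > 0 \<longrightarrow> p x > 0"
proof -
  have "AE x in density \<nu> p. p x > 0" by (simp add: AE_density)
  then have "AE x in density \<nu> q. p x > 0"
    using absolutely_continuous_AE[OF _ assms(3)] by simp
  then show ?thesis by (simp add: AE_density)
qed

definition renyi_integrand :: "real \<Rightarrow> ennreal \<Rightarrow> ennreal \<Rightarrow> ennreal" where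
  "renyi_integrand \<alpha> q p = (if p > 0 then epow q \<alpha> * epow p (1 - \<alpha>) else 0)"

lemma borel_measurable_renyi_integrand [measurable]:
  assumes [measurable]: "q \<in> borel_measurable M" "p \<in> borel_measurable M"
  shows "(\<lambda>x. renyi_integrand \<alpha> (q x) (p x)) \<in> borel_measurable M"
  unfolding renyi_integrand_def by measurable

lemma renyi_integrand_ennreal:
  "b > 0 \<Longrightarrow> a > 0 \<Longrightarrow> renyi_integrand \<alpha> (ennreal b) (ennreal a) = ennreal (b powr \<alpha> * a powr (1 - \<alpha>))"
  by (simp add: renyi_integrand_def epow_ennreal ennreal_mult)

lemma renyi_eq_integral:
  assumes "\<alpha> > 0" "\<alpha> > 1 \<Longrightarrow> absolutely_continuous (density \<nu> p) (density \<nu> q)"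
  shows "renyi \<nu> q p \<alpha> = ereal (1 / (\<alpha> * (\<alpha> - 1))) * elog (\<integral>\<^sup>+ x. renyi_integrand \<alpha> (q x) (p x) \<partial>\<nu>)"
  using assms by (auto simp: renyi_def renyi_pos_def renyi_integrand_def)

lemma powr_Holder_factorization:
  fixes a b r s :: real
  assumes "a > 0" "b > 0" "r > 0" "0 < s" "s < 1"
  shows "(a * r powr (1/s)) powr s * (b powr (1/(1-s)) * a powr (1 - 1/(1-s))) powr (1-s) = b * r"
proof -
  have "(a * r powr (1/s)) powr s * (b powr (1/(1-s)) * a powr (1 - 1/(1-s))) powr (1-s)
      = a powr (s + (1 - 1/(1-s)) * (1-s)) * b powr (1/(1-s) * (1-s)) * r powr (1/s * s)"
    using assms by (simp add: powr_mult powr_powr powr_add mult_ac)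
  also have "\<dots> = b * r" using assms by (simp add: field_simps)
  finally show ?thesis .
qed

lemma powr_Holder_factorization_neg:
  fixes a b r c :: real
  assumes "a > 0" "b > 0" "r > 0" "c < 0"
  shows "(a * r powr c) powr (1/(1-c)) * (b * r) powr (1 - 1/(1-c)) = a powr (1/(1-c)) * b powr (1 - 1/(1-c))"
proof -
  have "(a * r powr c) powr (1/(1-c)) * (b * r) powr (1 - 1/(1-c))
      = a powr (1/(1-c)) * b powr (1 - 1/(1-c)) * r powr (c * (1/(1-c)) + (1 - 1/(1-c)))"
    using assms by (simp add: powr_mult powr_powr powr_add mult_ac)
  also have "c * (1/(1-c)) + (1 - 1/(1-c)) = 0" using assms by (simp add: field_simps)
  finally show ?thesis using assms by simp
qed

lemma mult_le_epow_renyi_integrand: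
  fixes p q u :: ennreal and s :: real
  assumes s: "0 < s" "s < 1" and "p \<noteq> \<top>" "q \<noteq> \<top>" "q > 0 \<longrightarrow> p > 0"
  shows "q * u \<le> epow (p * epow u (1/s)) s * epow (renyi_integrand (1/(1-s)) q p) (1-s)"
proof (cases q rule: ennreal_cases_pos)
  case (pos b)
  then obtain a where a: "a > 0" "p = ennreal a"
    using assms by (cases p rule: ennreal_cases_pos) auto
  have R: "renyi_integrand (1/(1-s)) q p = ennreal (b powr (1/(1-s)) * a powr (1 - 1/(1-s)))"
    using pos a by (simp add: renyi_integrand_ennreal)
  show ?thesis
  proof (cases u rule: ennreal_cases_pos)
    case top
    have "epow (p * epow u (1/s)) s = \<top>"
      using a s top by (simp add: epow_top ennreal_mult_top)
    then show ?thesis using R pos a s by (simp add: epow_ennreal ennreal_top_mult)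
  next
    case (pos r)
    then show ?thesis
      using R a \<open>b > 0\<close> \<open>q = ennreal b\<close> s powr_Holder_factorization[of a b r s]
      by (simp add: epow_ennreal flip: ennreal_mult)
  qed simp
qed (use assms in simp_all)

lemma renyi_integrand_le_epow:
  fixes p q u :: ennreal and c :: real
  assumes c: "c < 0" and "p \<noteq> \<top>" "q \<noteq> \<top>" "p > 0 \<longrightarrow> u \<noteq> 0" "q > 0 \<longrightarrow> u \<noteq> \<top>"
  shows "renyi_integrand (1/(1-c)) p q \<le> epow (p * epow u c) (1/(1-c)) * epow (q * u) (1 - 1/(1-c))"
proof (cases q rule: ennreal_cases_pos)
  case (pos b)
  show ?thesis
  proof (cases p rule: ennreal_cases_pos)
    case zero
    then show ?thesis using c by (simp add: renyi_integrand_def epow_zero)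
  next
    case (pos a)
    then obtain r where "r > 0" "u = ennreal r"
      using assms \<open>b > 0\<close> \<open>q = ennreal b\<close> by (cases u rule: ennreal_cases_pos) auto
    then show ?thesis
      using pos \<open>b > 0\<close> \<open>q = ennreal b\<close> c powr_Holder_factorization_neg[of a b r c]
      by (simp add: renyi_integrand_ennreal epow_ennreal flip: ennreal_mult)
  qed (use assms in simp)
qed (use assms in \<open>simp_all add: renyi_integrand_def\<close>)

lemma elog_nn_integral_density_le_Holder_renyi:
  fixes u :: "'a \<Rightarrow> ennreal"
  assumes [measurable]: "p \<in> borel_measurable \<nu>" "q \<in> borel_measurable \<nu>" "u \<in> borel_measurable \<nu>"
    and P: "prob_space (density \<nu> p)" and Q: "prob_space (density \<nu> q)"
    and s: "0 < s" "s < 1" and ac: "absolutely_continuous (density \<nu> p) (density \<nu> q)"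
  shows "elog (\<integral>\<^sup>+ x. u x \<partial>density \<nu> q)
    \<le> ereal s * elog (\<integral>\<^sup>+ x. epow (u x) (1/s) \<partial>density \<nu> p)
      + ereal (1 - s) * elog (\<integral>\<^sup>+ x. renyi_integrand (1/(1-s)) (q x) (p x) \<partial>\<nu>)"
proof -
  have "AE x in \<nu>. q x * u x
      \<le> epow (p x * epow (u x) (1/s)) s * epow (renyi_integrand (1/(1-s)) (q x) (p x)) (1 - s)"
    using AE_density_finite[OF assms(1) P] AE_density_finite[OF assms(2) Q]
      absolutely_continuous_density_AE[OF assms(1,2) ac]
    by eventually_elim (intro mult_le_epow_renyi_integrand s)
  then have "elog (\<integral>\<^sup>+ x. q x * u x \<partial>\<nu>)
      \<le> ereal s * elog (\<integral>\<^sup>+ x. p x * epow (u x) (1/s) \<partial>\<nu>)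
        + ereal (1 - s) * elog (\<integral>\<^sup>+ x. renyi_integrand (1/(1-s)) (q x) (p x) \<partial>\<nu>)"
    by (intro elog_nn_integral_Holder s) measurable
  then show ?thesis by (simp add: nn_integral_density)
qed

lemma elog_renyi_integral_le_Holder:
  fixes u :: "'a \<Rightarrow> ennreal"
  assumes [measurable]: "p \<in> borel_measurable \<nu>" "q \<in> borel_measurable \<nu>" "u \<in> borel_measurable \<nu>"
    and P: "prob_space (density \<nu> p)" and Q: "prob_space (density \<nu> q)" and c: "c < 0"
    and finite: "(\<integral>\<^sup>+ x. epow (u x) c \<partial>density \<nu> p) \<noteq> \<top>" "(\<integral>\<^sup>+ x. u x \<partial>density \<nu> q) \<noteq> \<top>"
  shows "elog (\<integral>\<^sup>+ x. renyi_integrand (1/(1-c)) (p x) (q x) \<partial>\<nu>)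
    \<le> ereal (1/(1-c)) * elog (\<integral>\<^sup>+ x. epow (u x) c \<partial>density \<nu> p)
      + ereal (1 - 1/(1-c)) * elog (\<integral>\<^sup>+ x. u x \<partial>density \<nu> q)"
proof -
  have t: "0 < 1/(1-c)" "1/(1-c) < 1"
    using c by (auto simp: field_simps)
  have "AE x in \<nu>. p x * epow (u x) c \<noteq> \<top>" "AE x in \<nu>. q x * u x \<noteq> \<top>"
    using finite nn_integral_PInf_AE[of "\<lambda>x. p x * epow (u x) c" \<nu>]
      nn_integral_PInf_AE[of "\<lambda>x. q x * u x" \<nu>]
    by (simp_all add: nn_integral_density)
  then have "AE x in \<nu>. renyi_integrand (1/(1-c)) (p x) (q x)
      \<le> epow (p x * epow (u x) c) (1/(1-c)) * epow (q x * u x) (1 - 1/(1-c))"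
    using AE_density_finite[OF assms(1) P] AE_density_finite[OF assms(2) Q]
    by eventually_elim
      (intro renyi_integrand_le_epow c, auto simp: epow_zero_neg[OF c] ennreal_mult_top split: if_splits)
  then have "elog (\<integral>\<^sup>+ x. renyi_integrand (1/(1-c)) (p x) (q x) \<partial>\<nu>)
      \<le> ereal (1/(1-c)) * elog (\<integral>\<^sup>+ x. p x * epow (u x) c \<partial>\<nu>)
        + ereal (1 - 1/(1-c)) * elog (\<integral>\<^sup>+ x. q x * u x \<partial>\<nu>)"
    by (intro elog_nn_integral_Holder t) measurable
  then show ?thesis by (simp add: nn_integral_density)
qed

lemma elog_renyi_integral_nonneg:
  assumes [measurable]: "p \<in> borel_measurable \<nu>" "q \<in> borel_measurable \<nu>"
    and P: "prob_space (density \<nu> p)" and Q: "prob_space (density \<nu> q)"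
    and \<alpha>: "\<alpha> > 1" and ac: "absolutely_continuous (density \<nu> p) (density \<nu> q)"
  shows "0 \<le> elog (\<integral>\<^sup>+ x. renyi_integrand \<alpha> (q x) (p x) \<partial>\<nu>)"
proof -
  have s: "0 < 1 - 1/\<alpha>" "1 - 1/\<alpha> < 1" "1 / (1 - (1 - 1/\<alpha>)) = \<alpha>"
    using \<alpha> by auto
  have "elog (\<integral>\<^sup>+ x. 1 \<partial>density \<nu> q)
      \<le> ereal (1 - 1/\<alpha>) * elog (\<integral>\<^sup>+ x. epow 1 (1 / (1 - 1/\<alpha>)) \<partial>density \<nu> p)
        + ereal (1 - (1 - 1/\<alpha>)) * elog (\<integral>\<^sup>+ x. renyi_integrand \<alpha> (q x) (p x) \<partial>\<nu>)"
    using elog_nn_integral_density_le_Holder_renyi[where u="\<lambda>_. 1", OF assms(1,2) borel_measurable_const P Q s(1,2) ac] s(3) by simp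
  then show ?thesis
    using \<alpha> prob_space.emeasure_space_1[OF P] prob_space.emeasure_space_1[OF Q]
    by (simp add: ereal_zero_le_0_iff)
qed

lemma elog_renyi_integral_nonpos:
  assumes [measurable]: "p \<in> borel_measurable \<nu>" "q \<in> borel_measurable \<nu>"
    and P: "prob_space (density \<nu> p)" and Q: "prob_space (density \<nu> q)"
    and \<alpha>: "0 < \<alpha>" "\<alpha> < 1"
  shows "elog (\<integral>\<^sup>+ x. renyi_integrand \<alpha> (p x) (q x) \<partial>\<nu>) \<le> 0"
proof -
  have c: "1 - 1/\<alpha> < 0" "1 / (1 - (1 - 1/\<alpha>)) = \<alpha>"
    using \<alpha> by (auto simp: field_simps)
  show ?thesis
    using elog_renyi_integral_le_Holder[where u="\<lambda>_. 1", OF assms(1,2) borel_measurable_const P Q c(1)] c(2)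
      prob_space.emeasure_space_1[OF P] prob_space.emeasure_space_1[OF Q]
    by simp
qed

lemma minus_conv_le:
  fixes x b k :: ereal
  assumes "k \<noteq> -\<infinity>" "x \<le> b + k"
  shows "minus_conv x k \<le> b"
  using assms by (cases x; cases b; cases k) (auto simp: minus_conv_def)

lemma minus_conv_scaled_le_pos:
  fixes a b j :: ereal and c :: real
  assumes c: "0 < c" "c < 1" and "a \<le> ereal c * b + ereal (1 - c) * j" "0 \<le> j"
  shows "minus_conv (ereal (1/c) * a) (ereal ((1-c)/c) * j) \<le> b"
proof (rule minus_conv_le)
  show "ereal ((1-c)/c) * j \<noteq> -\<infinity>"
    using assms by (cases j) auto
  have "ereal (1/c) * a \<le> ereal (1/c) * (ereal c * b + ereal (1 - c) * j)"
    using assms by (intro ereal_mult_left_mono) auto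
  also have "\<dots> = b + ereal ((1-c)/c) * j"
    using assms by (cases b; cases j) (auto simp: field_simps)
  finally show "ereal (1/c) * a \<le> b + ereal ((1-c)/c) * j" .
qed

lemma divide_neg_le_of_le_convex_comb:
  fixes a b j c :: real
  assumes c: "c < 0" and j: "j \<le> 1/(1-c) * a + (1 - 1/(1-c)) * b"
  shows "1/c * a \<le> b + (1-c)/c * j"
proof -
  have "(1-c) * j \<le> (1-c) * (1/(1-c) * a + (1 - 1/(1-c)) * b)"
    by (rule mult_left_mono[OF j]) (use c in linarith)
  also have "\<dots> = a - c * b"
    using c by (simp add: divide_simps)
  finally have "c * b + (1-c) * j \<le> a"
    by linarith
  then have "1/c * a \<le> 1/c * (c * b + (1-c) * j)"
    by (rule mult_left_mono_neg) (use c in simp)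
  also have "\<dots> = b + (1-c)/c * j"
    using c by (simp add: field_simps)
  finally show ?thesis .
qed

lemma minus_conv_scaled_le_neg:
  fixes a b j :: ereal and c :: real
  assumes c: "c < 0" and "j \<le> 0"
    and "a \<noteq> \<infinity> \<Longrightarrow> b \<noteq> \<infinity> \<Longrightarrow> j \<le> ereal (1/(1-c)) * a + ereal (1 - 1/(1-c)) * b"
  shows "minus_conv (ereal (1/c) * a) (ereal ((1-c)/c) * j) \<le> b"
proof (rule minus_conv_le)
  have signs: "1/c < 0" "(1-c)/c < 0" "1/(1-c) > 0" "1 - 1/(1-c) > 0"
    using c by (auto simp: divide_pos_neg field_simps)
  then show "ereal ((1-c)/c) * j \<noteq> -\<infinity>"
    using assms by (cases j) auto
  show "ereal (1/c) * a \<le> b + ereal ((1-c)/c) * j"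
  proof (cases "a = \<infinity> \<or> b = \<infinity>")
    case True
    then show ?thesis using signs by auto
  next
    case False
    then have "j \<le> ereal (1/(1-c)) * a + ereal (1 - 1/(1-c)) * b"
      using assms by simp
    then show ?thesis
      using False signs divide_neg_le_of_le_convex_comb[OF c]
      by (cases a; cases b; cases j) auto
  qed
qed

lemma elog_nn_integral_le_renyi_bound:
  fixes \<tau> :: "'a \<Rightarrow> ennreal"
  assumes [measurable]: "p \<in> borel_measurable \<nu>" "q \<in> borel_measurable \<nu>" "\<tau> \<in> borel_measurable \<nu>"
    and P: "prob_space (density \<nu> p)" and Q: "prob_space (density \<nu> q)" and c: "c > 1"
  shows "elog (\<integral>\<^sup>+ x. \<tau> x \<partial>density \<nu> q)
    \<le> ereal (1/c) * elog (\<integral>\<^sup>+ x. epow (\<tau> x) c \<partial>density \<nu> p)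
      + ereal (1/(c-1)) * renyi \<nu> q p (c/(c-1))"
proof (cases "absolutely_continuous (density \<nu> p) (density \<nu> q)")
  case True
  have \<alpha>: "c/(c-1) > 1" "1 / (1 - 1/c) = c/(c-1)" "1 / (1/c) = c"
    using c by (auto simp: field_simps)
  have coeff: "1/(c-1) * (1 / (c/(c-1) * (c/(c-1) - 1))) = 1 - 1/c"
    using c by (simp add: field_simps)
  have "ereal (1/(c-1)) * renyi \<nu> q p (c/(c-1))
      = ereal (1 - 1/c) * elog (\<integral>\<^sup>+ x. renyi_integrand (c/(c-1)) (q x) (p x) \<partial>\<nu>)"
    using True \<alpha> coeff by (simp add: renyi_eq_integral mult.assoc[symmetric])
  then show ?thesis
    using elog_nn_integral_density_le_Holder_renyi[OF assms(1-5), of "1/c"] True \<alpha> c by simp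
next
  case False
  then have "renyi \<nu> q p (c/(c-1)) = \<infinity>"
    using c by (simp add: renyi_def renyi_pos_def field_simps)
  then show ?thesis using c by simp
qed

lemma renyi_prefactor_dual:
  fixes c :: real
  assumes "c < 1" "c \<noteq> 0"
  shows "1/(1-c) * (1 / (1/(1-c) * (1/(1-c) - 1))) = (1-c)/c"
  using assms by (simp add: field_simps)

lemma renyi_bound_le_elog_nn_integral_pos:
  fixes \<tau> :: "'a \<Rightarrow> ennreal"
  assumes [measurable]: "p \<in> borel_measurable \<nu>" "q \<in> borel_measurable \<nu>" "\<tau> \<in> borel_measurable \<nu>"
    and P: "prob_space (density \<nu> p)" and Q: "prob_space (density \<nu> q)" and c: "0 < c" "c < 1"
  shows "minus_conv (ereal (1/c) * elog (\<integral>\<^sup>+ x. epow (\<tau> x) c \<partial>density \<nu> p))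
      (ereal (1/(1-c)) * renyi \<nu> p q (1/(1-c)))
    \<le> elog (\<integral>\<^sup>+ x. \<tau> x \<partial>density \<nu> q)"
proof (cases "absolutely_continuous (density \<nu> q) (density \<nu> p)")
  case True
  define J where "J = elog (\<integral>\<^sup>+ x. renyi_integrand (1/(1-c)) (p x) (q x) \<partial>\<nu>)"
  have "ereal (1/(1-c)) * renyi \<nu> p q (1/(1-c)) = ereal ((1-c)/c) * J"
    using True c renyi_prefactor_dual[of c] by (simp add: J_def renyi_eq_integral mult.assoc[symmetric])
  moreover have "elog (\<integral>\<^sup>+ x. epow (\<tau> x) c \<partial>density \<nu> p)
      \<le> ereal c * elog (\<integral>\<^sup>+ x. \<tau> x \<partial>density \<nu> q) + ereal (1 - c) * J"
    using elog_nn_integral_density_le_Holder_renyi[OF assms(2,1) borel_measurable_epow[OF assms(3), of c] Q P c True] c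
    by (simp add: J_def epow_epow)
  moreover have "0 \<le> J"
    unfolding J_def using c by (intro elog_renyi_integral_nonneg[OF assms(2,1) Q P _ True]) simp
  ultimately show ?thesis
    using minus_conv_scaled_le_pos c by simp
next
  case False
  then have "renyi \<nu> p q (1/(1-c)) = \<infinity>"
    using c by (simp add: renyi_def renyi_pos_def)
  then show ?thesis using c by (intro minus_conv_le) simp_all
qed

lemma renyi_bound_le_elog_nn_integral_neg:
  fixes \<tau> :: "'a \<Rightarrow> ennreal"
  assumes [measurable]: "p \<in> borel_measurable \<nu>" "q \<in> borel_measurable \<nu>" "\<tau> \<in> borel_measurable \<nu>"
    and P: "prob_space (density \<nu> p)" and Q: "prob_space (density \<nu> q)" and c: "c < 0"
  shows "minus_conv (ereal (1/c) * elog (\<integral>\<^sup>+ x. epow (\<tau> x) c \<partial>density \<nu> p))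
      (ereal (1/(1-c)) * renyi \<nu> p q (1/(1-c)))
    \<le> elog (\<integral>\<^sup>+ x. \<tau> x \<partial>density \<nu> q)"
proof -
  define J where "J = elog (\<integral>\<^sup>+ x. renyi_integrand (1/(1-c)) (p x) (q x) \<partial>\<nu>)"
  have "renyi \<nu> p q (1/(1-c)) = ereal (1 / (1/(1-c) * (1/(1-c) - 1))) * J"
    unfolding J_def by (rule renyi_eq_integral) (use c in \<open>auto simp: field_simps\<close>)
  then have "ereal (1/(1-c)) * renyi \<nu> p q (1/(1-c)) = ereal ((1-c)/c) * J"
    using c renyi_prefactor_dual[of c] by (simp add: mult.assoc[symmetric])
  moreover have "J \<le> 0"
    unfolding J_def using c by (intro elog_renyi_integral_nonpos[OF assms(1,2) P Q]) auto
  moreover have "J \<le> ereal (1/(1-c)) * elog (\<integral>\<^sup>+ x. epow (\<tau> x) c \<partial>density \<nu> p)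
      + ereal (1 - 1/(1-c)) * elog (\<integral>\<^sup>+ x. \<tau> x \<partial>density \<nu> q)"
    if "elog (\<integral>\<^sup>+ x. epow (\<tau> x) c \<partial>density \<nu> p) \<noteq> \<infinity>" "elog (\<integral>\<^sup>+ x. \<tau> x \<partial>density \<nu> q) \<noteq> \<infinity>"
    unfolding J_def using that
    by (intro elog_renyi_integral_le_Holder[OF assms]) (simp_all add: elog_eq_infinity_iff)
  ultimately show ?thesis
    using minus_conv_scaled_le_neg[OF c] by simp
qed

theorem mainTheorem10:
  fixes \<nu> :: "'a measure" and p q :: "'a \<Rightarrow> ennreal" and \<tau> :: "'a \<Rightarrow> ennreal"
  assumes "sigma_finite_measure \<nu>"
    and "p \<in> borel_measurable \<nu>" and "q \<in> borel_measurable \<nu>"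
    and "prob_space (density \<nu> p)" and "prob_space (density \<nu> q)"
    and "\<tau> \<in> borel_measurable \<nu>"
  shows "(elog (\<integral>\<^sup>+ x. \<tau> x \<partial>density \<nu> q)
           \<le> (INF c\<in>{1<..}. ereal (1 / c) * elog (\<integral>\<^sup>+ x. epow (\<tau> x) c \<partial>density \<nu> p)
                              + ereal (1 / (c - 1)) * renyi \<nu> q p (c / (c - 1))))
       \<and> (elog (\<integral>\<^sup>+ x. \<tau> x \<partial>density \<nu> q)
           \<ge> (SUP c\<in>{c. c < 1 \<and> c \<noteq> 0}.
                 minus_conv (ereal (1 / c) * elog (\<integral>\<^sup>+ x. epow (\<tau> x) c \<partial>density \<nu> p))
                            (ereal (1 / (1 - c)) * renyi \<nu> p q (1 / (1 - c)))))"
proof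
  show "elog (\<integral>\<^sup>+ x. \<tau> x \<partial>density \<nu> q)
      \<le> (INF c\<in>{1<..}. ereal (1 / c) * elog (\<integral>\<^sup>+ x. epow (\<tau> x) c \<partial>density \<nu> p)
                         + ereal (1 / (c - 1)) * renyi \<nu> q p (c / (c - 1)))"
    using elog_nn_integral_le_renyi_bound[OF assms(2,3,6,4,5)] by (auto intro: INF_greatest)
  show "elog (\<integral>\<^sup>+ x. \<tau> x \<partial>density \<nu> q)
      \<ge> (SUP c\<in>{c. c < 1 \<and> c \<noteq> 0}.
            minus_conv (ereal (1 / c) * elog (\<integral>\<^sup>+ x. epow (\<tau> x) c \<partial>density \<nu> p))
                       (ereal (1 / (1 - c)) * renyi \<nu> p q (1 / (1 - c))))"
  proof (rule SUP_least)
    fix c :: real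
    assume "c \<in> {c. c < 1 \<and> c \<noteq> 0}"
    then consider "0 < c" "c < 1" | "c < 0" by fastforce
    then show "minus_conv (ereal (1 / c) * elog (\<integral>\<^sup>+ x. epow (\<tau> x) c \<partial>density \<nu> p))
        (ereal (1 / (1 - c)) * renyi \<nu> p q (1 / (1 - c))) \<le> elog (\<integral>\<^sup>+ x. \<tau> x \<partial>density \<nu> q)"
      using renyi_bound_le_elog_nn_integral_pos[OF assms(2,3,6,4,5)]
        renyi_bound_le_elog_nn_integral_neg[OF assms(2,3,6,4,5)]
      by cases
  qed
qed

end
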